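(* Let $D>0$, $b>0$, $\delta\in(0,D)$, $y\in\mathbb R$, and define on $\{\mathrm{Re}\,z>0\}$ $$R(z)=\sqrt D\int_{\mathbb R}\frac{\exp\big(-\frac{|x-y|}{\sqrt D}\sqrt z\big)}{\sqrt z}\,\varphi_{b,\delta}(x)\,dx .$$ Then $R$ is the Laplace transform of a function on $(0,\infty)$, and $R(z)=O(z^{-1})$ as $z\to\infty$ in $\{\mathrm{Re}\,z>0\}$.
   Context: Principal branch of $\sqrt z$. $\varphi_{b,\delta}(x)=\frac1{\sqrt{2\pi\delta}}\big(e^{-x^2/(2\delta)}-e^{-(x-2b)^2/(2\delta)}\big)$ for $x\in\mathbb R$. (The integrand factor $e^{-a\sqrt z}/\sqrt z$ is the Laplace transform of $\chi_a(u)=\frac1{\sqrt{\pi u}}e^{-a^2/(4u)}$.) *)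

theory Defs
  imports "HOL-Analysis.Analysis" "HOL-Library.Landau_Symbols"
begin

definition phi_bd :: "real \<Rightarrow> real \<Rightarrow> real \<Rightarrow> real" where
  "phi_bd b \<delta> x = (1 / sqrt (2 * pi * \<delta>)) *
      (exp (- (x^2) / (2 * \<delta>)) - exp (- ((x - 2 * b)^2) / (2 * \<delta>)))"

definition R_fun :: "real \<Rightarrow> real \<Rightarrow> real \<Rightarrow> real \<Rightarrow> complex \<Rightarrow> complex" where
  "R_fun D b \<delta> y z = complex_of_real (sqrt D) *
      integral\<^sup>L lborel (\<lambda>x::real.
        exp (- complex_of_real (\<bar>x - y\<bar> / sqrt D) * csqrt z) / csqrt z
        * complex_of_real (phi_bd b \<delta> x))"

end

theory Submission
  imports Defs "HOL-Probability.Probability" "HOL-Real_Asymp.Real_Asymp"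
begin

text \<open>
  Writing both Gaussians in \<phi> as characteristic functions of the standard normal law
  gives \<phi>(x) = \<integral> w(s) e^(i\<kappa>sx) ds with \<kappa> = 1/sqrt \<delta> and w integrable. The two-sided
  exponential x \<mapsto> e^(-c|x - y|) has Fourier transform 2c/(c^2 + k^2), so by Fubini R is a
  resolvent mixture R(z) = \<integral> g(s)/(z + a(s)) ds with g integrable and a(s) = D\<kappa>^2s^2 \<ge> 0.
  Each 1/(z + a) is the Laplace transform of e^(-at), so Fubini once more exhibits R as the
  Laplace transform of t \<mapsto> \<integral> g(s) e^(-a(s)t) ds; and |z + a| \<ge> |z| for Re z \<ge> 0
  and a \<ge> 0 gives |R(z)| \<le> \<integral> |g|/|z|.
\<close>

lemma set_integrable_exp_neg_mult:
  fixes w :: complex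
  assumes "0 < Re w"
  shows "set_integrable lborel {0<..} (\<lambda>t::real. exp (- w * of_real t))"
  unfolding set_integrable_def
proof (rule Bochner_Integration.integrable_bound)
  show "integrable lborel (\<lambda>t::real. indicator {0<..} t *\<^sub>R exp (- (t * Re w)))"
    using integrable_I0i_exp_mscale[OF assms] unfolding set_integrable_def .
  show "(\<lambda>t. indicator {0<..} t *\<^sub>R exp (- w * of_real t)) \<in> borel_measurable lborel"
    by measurable
qed (auto simp: indicator_def norm_exp_eq_Re mult.commute)

lemma set_integral_exp_neg_mult:
  fixes w :: complex
  assumes "0 < Re w"
  shows "(LINT t:{0<..}|lborel. exp (- w * of_real t)) = 1 / w"
proof -
  have w0: "w \<noteq> 0" using assms by auto
  have "(LBINT t=ereal 0..\<infinity>. exp (- w * of_real t)) = 0 - (- 1 / w)"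
  proof (rule interval_integral_FTC_integrable[where F="\<lambda>t. - exp (- w * of_real t) / w"])
    fix x :: real
    have "((\<lambda>t. - exp (- w * t) / w) has_field_derivative exp (- w * of_real x)) (at (of_real x))"
      using w0 by (auto intro!: derivative_eq_intros simp: field_simps)
    from has_vector_derivative_real_field[OF this]
    show "((\<lambda>t. - exp (- w * of_real t) / w) has_vector_derivative exp (- w * of_real x)) (at x)"
      by simp
    show "isCont (\<lambda>t. exp (- w * complex_of_real t)) x"
      by (intro continuous_intros)
  next
    show "set_integrable lborel (einterval (ereal 0) \<infinity>) (\<lambda>t. exp (- w * complex_of_real t))"
      using set_integrable_exp_neg_mult[OF assms] by (simp add: einterval_def greaterThan_def)
  next
    show "(((\<lambda>t. - exp (- w * complex_of_real t) / w) \<circ> real_of_ereal) \<longlongrightarrow> - 1 / w) (at_right (ereal 0))"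
      unfolding ereal_tendsto_simps1 using w0 by (auto intro!: tendsto_eq_intros)
  next
    have "((\<lambda>t. exp (- w * complex_of_real t)) \<longlongrightarrow> 0) at_top"
    proof (rule tendsto_norm_zero_cancel)
      have "((\<lambda>t. exp (- (Re w * t))) \<longlongrightarrow> 0) at_top"
        using assms by real_asymp
      then show "((\<lambda>t. norm (exp (- w * complex_of_real t))) \<longlongrightarrow> 0) at_top"
        by (simp add: norm_exp_eq_Re)
    qed
    from tendsto_divide[OF tendsto_minus[OF this] tendsto_const[of w]]
    show "(((\<lambda>t. - exp (- w * complex_of_real t) / w) \<circ> real_of_ereal) \<longlongrightarrow> 0) (at_left \<infinity>)"
      unfolding ereal_tendsto_simps1 using w0 by simp
  qed simp
  then show ?thesis
    by (simp add: interval_integral_to_infinity_eq)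
qed

lemma pair_sigma_finite_lborel: "pair_sigma_finite lborel lborel"
  by (simp add: lborel.sigma_finite_measure_axioms pair_sigma_finite_def)

lemma integrable_pair_lborel_product_bound:
  fixes f :: "real \<times> real \<Rightarrow> complex" and a b :: "real \<Rightarrow> real"
  assumes f: "f \<in> borel_measurable (lborel \<Otimes>\<^sub>M lborel)"
    and a: "integrable lborel a" "\<And>x. 0 \<le> a x"
    and b: "integrable lborel b" "\<And>s. 0 \<le> b s"
    and bound: "\<And>x s. norm (f (x, s)) \<le> a x * b s"
  shows "integrable (lborel \<Otimes>\<^sub>M lborel) f"
proof -
  have [measurable]: "a \<in> borel_measurable borel" "b \<in> borel_measurable borel"
    using a b by auto
  have "integrable (lborel \<Otimes>\<^sub>M lborel) (\<lambda>p. a (fst p) * b (snd p))"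
  proof (rule pair_sigma_finite.Fubini_integrable[OF pair_sigma_finite_lborel])
    have "(\<lambda>x. LINT s|lborel. norm (a (fst (x, s)) * b (snd (x, s)))) = (\<lambda>x. a x * integral\<^sup>L lborel b)"
      using a b by (simp add: abs_mult)
    then show "integrable lborel (\<lambda>x. LINT s|lborel. norm (a (fst (x, s)) * b (snd (x, s))))"
      using a by simp
  qed (use b in auto)
  then show ?thesis
    by (rule Bochner_Integration.integrable_bound) (use f bound a(2) b(2) in auto)
qed

lemma norm_le_norm_add_of_real_nonneg:
  fixes z :: complex
  assumes "0 \<le> Re z" "0 \<le> r"
  shows "norm z \<le> norm (z + of_real r)"
proof -
  have "(Re z)\<^sup>2 \<le> (Re z + r)\<^sup>2"
    using assms by (intro power_mono) auto
  then show ?thesis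
    unfolding cmod_def by (intro real_sqrt_le_mono) simp
qed

lemma integrable_resolvent_mixture_kernel:
  fixes g :: "real \<Rightarrow> complex" and a :: "real \<Rightarrow> real" and z :: complex
  assumes g: "integrable lborel g"
    and a: "a \<in> borel_measurable borel" "\<And>s. 0 \<le> a s"
    and z: "0 < Re z"
  shows "integrable (lborel \<Otimes>\<^sub>M lborel)
    (\<lambda>(s, t). indicator {0<..} t *\<^sub>R (g s * exp (- (z + of_real (a s)) * of_real t)))"
    (is "integrable _ (case_prod ?Q)")
proof -
  have [measurable]: "g \<in> borel_measurable borel"
    using g by auto
  note [measurable] = a(1)
  have decay: "norm (exp (- (z + of_real (a s)) * of_real t)) \<le> exp (- (t * Re z))" if "0 < t" for s t
  proof -
    have "norm (exp (- (z + of_real (a s)) * of_real t)) = exp (- (Re z + a s) * t)"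
      by (simp add: norm_exp_eq_Re)
    also have "\<dots> \<le> exp (- (t * Re z))"
      using that a(2)[of s] by (simp add: algebra_simps)
    finally show ?thesis .
  qed
  show ?thesis
  proof (rule integrable_pair_lborel_product_bound
      [where a = "\<lambda>s. norm (g s)" and b = "\<lambda>t. indicator {0<..} t * exp (- (t * Re z))"])
    show "case_prod ?Q \<in> borel_measurable (lborel \<Otimes>\<^sub>M lborel)"
      by measurable
    show "integrable lborel (\<lambda>t. indicator {0<..} t * exp (- (t * Re z)))"
      using integrable_I0i_exp_mscale[OF z] by (simp add: set_integrable_def)
    show "norm (case_prod ?Q (s, t)) \<le> norm (g s) * (indicator {0<..} t * exp (- (t * Re z)))" for s t
    proof (cases "0 < t")
      case True
      then show ?thesis
        using decay[OF True, of s] by (simp add: norm_mult mult_left_mono)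
    qed simp
  qed (use g in auto)
qed

lemma laplace_transform_resolvent_mixture:
  fixes g :: "real \<Rightarrow> complex" and a :: "real \<Rightarrow> real" and z :: complex
  assumes g: "integrable lborel g"
    and a: "a \<in> borel_measurable borel" "\<And>s. 0 \<le> a s"
    and z: "0 < Re z"
  defines "F \<equiv> \<lambda>t. LINT s|lborel. g s * exp (- of_real (a s) * of_real t)"
  shows "set_integrable lborel {0<..} (\<lambda>t. exp (- z * of_real t) * F t)"
    and "(LINT s|lborel. g s / (z + of_real (a s))) = (LINT t:{0<..}|lborel. exp (- z * of_real t) * F t)"
proof -
  have [measurable]: "g \<in> borel_measurable borel"
    using g by auto
  note [measurable] = a(1)
  define Q where "Q = (\<lambda>s t. indicator {0<..} t *\<^sub>R (g s * exp (- (z + of_real (a s)) * of_real t)))"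
  have Q_int: "integrable (lborel \<Otimes>\<^sub>M lborel) (case_prod Q)"
    using integrable_resolvent_mixture_kernel[OF g a z] unfolding Q_def .
  have inner_t: "(LINT t|lborel. Q s t) = g s / (z + of_real (a s))" for s
  proof -
    let ?w = "z + of_real (a s)"
    have w: "0 < Re ?w"
      using z a(2)[of s] by simp
    have "Q s t = g s * (indicator {0<..} t *\<^sub>R exp (- ?w * of_real t))" for t
      unfolding Q_def by (simp add: scaleR_conv_of_real)
    then have "(LINT t|lborel. Q s t) = g s * (LINT t:{0<..}|lborel. exp (- ?w * of_real t))"
      unfolding set_lebesgue_integral_def by (simp only: integral_mult_right_zero)
    then show ?thesis
      using set_integral_exp_neg_mult[OF w] by simp
  qed
  have inner_s: "(LINT s|lborel. Q s t) = indicator {0<..} t *\<^sub>R (exp (- z * of_real t) * F t)" for t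
  proof -
    have "Q s t = (indicator {0<..} t *\<^sub>R exp (- z * of_real t)) * (g s * exp (- of_real (a s) * of_real t))" for s
      unfolding Q_def by (simp add: scaleR_conv_of_real exp_add[symmetric] algebra_simps)
    then have "(LINT s|lborel. Q s t) = (indicator {0<..} t *\<^sub>R exp (- z * of_real t)) * F t"
      unfolding F_def by (simp only: integral_mult_right_zero)
    then show ?thesis
      by simp
  qed
  have "integrable lborel (\<lambda>t. LINT s|lborel. Q s t)"
    using pair_sigma_finite.integrable_snd[OF pair_sigma_finite_lborel Q_int] .
  then show "set_integrable lborel {0<..} (\<lambda>t. exp (- z * of_real t) * F t)"
    unfolding set_integrable_def inner_s .
  have "(LINT s|lborel. g s / (z + of_real (a s))) = (LINT s|lborel. LINT t|lborel. Q s t)"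
    unfolding inner_t ..
  also have "\<dots> = (LINT t|lborel. LINT s|lborel. Q s t)"
    using pair_sigma_finite.Fubini_integral[OF pair_sigma_finite_lborel Q_int] by simp
  finally show "(LINT s|lborel. g s / (z + of_real (a s))) = (LINT t:{0<..}|lborel. exp (- z * of_real t) * F t)"
    unfolding inner_s set_lebesgue_integral_def .
qed

lemma norm_resolvent_mixture_le:
  fixes g :: "real \<Rightarrow> complex" and a :: "real \<Rightarrow> real" and z :: complex
  assumes g: "integrable lborel g"
    and a: "a \<in> borel_measurable borel" "\<And>s. 0 \<le> a s"
    and z: "0 \<le> Re z" "z \<noteq> 0"
  shows "norm (LINT s|lborel. g s / (z + of_real (a s))) \<le> (LINT s|lborel. norm (g s)) * norm (inverse z)"
proof -
  have [measurable]: "g \<in> borel_measurable borel"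
    using g by auto
  note [measurable] = a(1)
  have pointwise: "norm (g s / (z + of_real (a s))) \<le> norm (g s) * norm (inverse z)" for s
  proof -
    have "norm z \<le> norm (z + of_real (a s))"
      using z a(2) by (intro norm_le_norm_add_of_real_nonneg) auto
    then have "norm (g s) / norm (z + of_real (a s)) \<le> norm (g s) / norm z"
      using z by (intro divide_left_mono mult_pos_pos) auto
    then show ?thesis
      by (metis norm_divide norm_inverse divide_inverse)
  qed
  have bound_int: "integrable lborel (\<lambda>s. norm (g s) * norm (inverse z))"
    using g by simp
  have "integrable lborel (\<lambda>s. g s / (z + of_real (a s)))"
    by (rule Bochner_Integration.integrable_bound[OF bound_int]) (use pointwise in auto)
  then have "norm (LINT s|lborel. g s / (z + of_real (a s))) \<le> (LINT s|lborel. norm (g s) * norm (inverse z))"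
    by (rule Bochner_Integration.integral_norm_bound_integral[OF _ bound_int]) (use pointwise in auto)
  then show ?thesis
    by simp
qed

lemma resolvent_mixture_laplace_transform_bigo_inverse:
  fixes F :: "complex \<Rightarrow> complex" and g :: "real \<Rightarrow> complex" and a :: "real \<Rightarrow> real"
  assumes g: "integrable lborel g"
    and a: "a \<in> borel_measurable borel" "\<And>s. 0 \<le> a s"
    and F: "\<And>z. 0 < Re z \<Longrightarrow> F z = (LINT s|lborel. g s / (z + of_real (a s)))"
  shows "(\<exists>f :: real \<Rightarrow> complex. \<forall>z. 0 < Re z \<longrightarrow>
            set_integrable lborel {0<..} (\<lambda>t. exp (- z * complex_of_real t) * f t)
            \<and> F z = (LINT t:{0<..}|lborel. exp (- z * complex_of_real t) * f t))
         \<and> F \<in> O[inf at_infinity (principal {z. 0 < Re z})](\<lambda>z. inverse z)"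
proof
  show "\<exists>f. \<forall>z. 0 < Re z \<longrightarrow>
      set_integrable lborel {0<..} (\<lambda>t. exp (- z * complex_of_real t) * f t)
      \<and> F z = (LINT t:{0<..}|lborel. exp (- z * complex_of_real t) * f t)"
  proof (intro exI allI impI)
    fix z :: complex
    assume z: "0 < Re z"
    show "set_integrable lborel {0<..}
        (\<lambda>t. exp (- z * of_real t) * (LINT s|lborel. g s * exp (- of_real (a s) * of_real t)))
      \<and> F z = (LINT t:{0<..}|lborel.
        exp (- z * of_real t) * (LINT s|lborel. g s * exp (- of_real (a s) * of_real t)))"
      using laplace_transform_resolvent_mixture[OF g a z] F[OF z] by simp
  qed
  have "\<forall>\<^sub>F z in inf at_infinity (principal {z. 0 < Re z}).
      norm (F z) \<le> (LINT s|lborel. norm (g s)) * norm (inverse z)"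
    unfolding eventually_inf_principal
  proof (intro always_eventually allI impI)
    fix z :: complex
    assume "z \<in> {z. 0 < Re z}"
    then have z: "0 < Re z"
      by simp
    then show "norm (F z) \<le> (LINT s|lborel. norm (g s)) * norm (inverse z)"
      unfolding F[OF z] by (intro norm_resolvent_mixture_le[OF g a]) auto
  qed
  then show "F \<in> O[inf at_infinity (principal {z. 0 < Re z})](\<lambda>z. inverse z)"
    by (rule bigoI)
qed

lemma lborel_integral_split_reflect:
  fixes h :: "real \<Rightarrow> complex"
  assumes pos: "set_integrable lborel {0<..} h"
    and neg: "set_integrable lborel {0<..} (\<lambda>v. h (- v))"
  shows "integrable lborel h"
    and "integral\<^sup>L lborel h = (LINT v:{0<..}|lborel. h v) + (LINT v:{0<..}|lborel. h (- v))"
proof -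
  let ?hn = "\<lambda>u. indicator {..<0} u *\<^sub>R h u"
  let ?hp = "\<lambda>u. indicator {0<..} u *\<^sub>R h u"
  have reflect: "(\<lambda>x. ?hn (0 + (-1) * x)) = (\<lambda>v. indicator {0<..} v *\<^sub>R h (- v))"
    by (auto simp: indicator_def fun_eq_iff)
  have hn_int: "integrable lborel ?hn"
    using lborel_integrable_real_affine_iff[of "-1" ?hn 0] neg unfolding reflect set_integrable_def by simp
  have hn_integral: "integral\<^sup>L lborel ?hn = (LINT v:{0<..}|lborel. h (- v))"
    using lborel_integral_real_affine[of "-1" ?hn 0] unfolding reflect set_lebesgue_integral_def by simp
  have hp_int: "integrable lborel ?hp"
    using pos unfolding set_integrable_def .
  have split: "h = (\<lambda>u. ?hp u + ?hn u + indicator {0} u *\<^sub>R h 0)"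
    by (auto simp: indicator_def fun_eq_iff)
  show h_int: "integrable lborel h"
    by (subst split) (intro Bochner_Integration.integrable_add hp_int hn_int integrable_scaleR_left integrable_real_indicator; simp)
  have "AE u in lborel. h u = ?hp u + ?hn u"
    using AE_lborel_singleton[of 0] by eventually_elim (auto simp: indicator_def)
  moreover have "integrable lborel (\<lambda>u. ?hp u + ?hn u)"
    using hp_int hn_int by (rule Bochner_Integration.integrable_add)
  ultimately have "integral\<^sup>L lborel h = integral\<^sup>L lborel (\<lambda>u. ?hp u + ?hn u)"
    using borel_measurable_integrable[OF h_int] by (intro integral_cong_AE) auto
  also have "\<dots> = (LINT v:{0<..}|lborel. h v) + (LINT v:{0<..}|lborel. h (- v))"
    using hp_int hn_int hn_integral by (simp add: set_lebesgue_integral_def)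
  finally show "integral\<^sup>L lborel h = (LINT v:{0<..}|lborel. h v) + (LINT v:{0<..}|lborel. h (- v))" .
qed

lemma integral_exp_neg_abs_iexp:
  fixes c :: complex and k y :: real
  assumes c: "0 < Re c"
  shows "integrable lborel (\<lambda>x. exp (- c * of_real \<bar>x - y\<bar>) * iexp (k * x))"
    and "(LINT x|lborel. exp (- c * of_real \<bar>x - y\<bar>) * iexp (k * x)) = iexp (k * y) * (2 * c / (c\<^sup>2 + (of_real k)\<^sup>2))"
proof -
  have half_line: "set_integrable lborel {0<..} f \<and> (LINT t:{0<..}|lborel. f t) = 1 / w"
    if "0 < Re w" "\<And>t. 0 < t \<Longrightarrow> f t = exp (- w * of_real t)" for f w
  proof -
    have "set_integrable lborel {0<..} f = set_integrable lborel {0<..} (\<lambda>t. exp (- w * of_real t))"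
      using that(2) by (intro set_integrable_cong) auto
    moreover have "(LINT t:{0<..}|lborel. f t) = (LINT t:{0<..}|lborel. exp (- w * of_real t))"
      using that(2) by (intro set_lebesgue_integral_cong) auto
    ultimately show ?thesis
      using set_integrable_exp_neg_mult[OF that(1)] set_integral_exp_neg_mult[OF that(1)] by simp
  qed
  define h where "h u = exp (- c * of_real \<bar>u\<bar>) * iexp (k * u)" for u
  have "h t = exp (- (c - \<i> * of_real k) * of_real t)" if "0 < t" for t
    using that by (simp add: h_def exp_add[symmetric] algebra_simps)
  with c have pos: "set_integrable lborel {0<..} h" "(LINT v:{0<..}|lborel. h v) = 1 / (c - \<i> * of_real k)"
    using half_line[of "c - \<i> * of_real k" h] by simp_all
  have "h (- t) = exp (- (c + \<i> * of_real k) * of_real t)" if "0 < t" for t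
    using that by (simp add: h_def exp_add[symmetric] algebra_simps)
  with c have neg: "set_integrable lborel {0<..} (\<lambda>v. h (- v))" "(LINT v:{0<..}|lborel. h (- v)) = 1 / (c + \<i> * of_real k)"
    using half_line[of "c + \<i> * of_real k" "\<lambda>v. h (- v)"] by simp_all
  have "c - \<i> * of_real k \<noteq> 0" "c + \<i> * of_real k \<noteq> 0"
    using c by (auto simp: complex_eq_iff)
  moreover have "c\<^sup>2 + (of_real k)\<^sup>2 = (c - \<i> * of_real k) * (c + \<i> * of_real k)"
    by (simp add: power2_eq_square algebra_simps)
  ultimately have partial_fractions:
    "1 / (c - \<i> * of_real k) + 1 / (c + \<i> * of_real k) = 2 * c / (c\<^sup>2 + (of_real k)\<^sup>2)"
    by (simp add: field_simps)
  define G where "G = (\<lambda>x. exp (- c * of_real \<bar>x - y\<bar>) * iexp (k * x))"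
  have shift: "G (y + 1 * u) = iexp (k * y) * h u" for u
    by (simp add: G_def h_def exp_add[symmetric] algebra_simps)
  have "integrable lborel (\<lambda>u. G (y + 1 * u))"
    unfolding shift using lborel_integral_split_reflect(1)[OF pos(1) neg(1)] by simp
  then have "integrable lborel G"
    using lborel_integrable_real_affine_iff[of 1 G y] by simp
  then show "integrable lborel (\<lambda>x. exp (- c * of_real \<bar>x - y\<bar>) * iexp (k * x))"
    unfolding G_def .
  have "integral\<^sup>L lborel G = integral\<^sup>L lborel (\<lambda>u. G (y + 1 * u))"
    using lborel_integral_real_affine[of 1 G y] by simp
  also have "\<dots> = iexp (k * y) * integral\<^sup>L lborel h"
    unfolding shift by simp
  also have "\<dots> = iexp (k * y) * (2 * c / (c\<^sup>2 + (of_real k)\<^sup>2))"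
    using lborel_integral_split_reflect(2)[OF pos(1) neg(1)] pos(2) neg(2) partial_fractions by simp
  finally show "(LINT x|lborel. exp (- c * of_real \<bar>x - y\<bar>) * iexp (k * x)) = iexp (k * y) * (2 * c / (c\<^sup>2 + (of_real k)\<^sup>2))"
    unfolding G_def .
qed

lemma std_normal_char_integral:
  "complex_of_real (exp (- (t\<^sup>2) / 2)) = (LINT s|lborel. complex_of_real (std_normal_density s) * iexp (t * s))"
proof -
  have "complex_of_real (exp (- (t\<^sup>2) / 2)) = char std_normal_distribution t"
    by (simp add: char_std_normal_distribution)
  also have "\<dots> = (LINT s|lborel. std_normal_density s *\<^sub>R iexp (t * s))"
    unfolding char_def by (rule integral_density) (auto simp: normal_density_nonneg)
  finally show ?thesis
    by (simp add: scaleR_conv_of_real)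
qed

lemma integrable_std_normal_density_iexp:
  "integrable lborel (\<lambda>s. complex_of_real (std_normal_density s) * iexp (t * s))"
proof (rule Bochner_Integration.integrable_bound)
  show "integrable lborel std_normal_density"
    using integrable_std_normal_moment[of 0] by simp
  show "(\<lambda>s. complex_of_real (std_normal_density s) * iexp (t * s)) \<in> borel_measurable lborel"
    by measurable
  show "AE s in lborel. norm (complex_of_real (std_normal_density s) * iexp (t * s)) \<le> norm (std_normal_density s)"
    by (intro AE_I2) (simp add: norm_mult norm_exp_i_times)
qed

definition phi_freq :: "real \<Rightarrow> real" where
  "phi_freq \<delta> = 1 / sqrt \<delta>"

definition phi_weight :: "real \<Rightarrow> real \<Rightarrow> real \<Rightarrow> complex" where
  "phi_weight b \<delta> s = complex_of_real (1 / sqrt (2 * pi * \<delta>) * std_normal_density s)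
      * (1 - iexp (- (2 * b * phi_freq \<delta>) * s))"

lemma borel_measurable_phi_weight [measurable]: "phi_weight b \<delta> \<in> borel_measurable borel"
  unfolding phi_weight_def by measurable

lemma integrable_phi_weight: "integrable lborel (phi_weight b \<delta>)"
proof (rule Bochner_Integration.integrable_bound)
  let ?C = "2 * \<bar>1 / sqrt (2 * pi * \<delta>)\<bar>"
  show "integrable lborel (\<lambda>s. ?C * std_normal_density s)"
    using integrable_std_normal_moment[of 0] by simp
  have unimodular_diff: "norm (1 - iexp r) \<le> 2" for r
    using norm_triangle_ineq4[of 1 "iexp r"] by (simp add: norm_exp_i_times)
  have "norm (phi_weight b \<delta> s) \<le> ?C * std_normal_density s" for s
  proof -
    have "norm (phi_weight b \<delta> s)
        = \<bar>1 / sqrt (2 * pi * \<delta>) * std_normal_density s\<bar> * norm (1 - iexp (- (2 * b * phi_freq \<delta>) * s))"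
      by (simp only: phi_weight_def norm_mult norm_of_real)
    also have "\<dots> \<le> \<bar>1 / sqrt (2 * pi * \<delta>) * std_normal_density s\<bar> * 2"
      by (intro mult_left_mono unimodular_diff) auto
    finally show ?thesis
      by (simp add: abs_mult normal_density_nonneg mult.commute)
  qed
  then show "AE s in lborel. norm (phi_weight b \<delta> s) \<le> norm (?C * std_normal_density s)"
    by (intro AE_I2 order_trans[OF _ abs_ge_self]) simp
  show "phi_weight b \<delta> \<in> borel_measurable lborel"
    by measurable
qed

lemma phi_bd_fourier:
  assumes "0 < \<delta>"
  shows "complex_of_real (phi_bd b \<delta> x) = (LINT s|lborel. phi_weight b \<delta> s * iexp (phi_freq \<delta> * s * x))"
proof -
  have "(phi_freq \<delta>)\<^sup>2 = 1 / \<delta>"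
    using assms by (simp add: phi_freq_def power_divide)
  then have gauss: "exp (- (u\<^sup>2) / (2 * \<delta>)) = exp (- ((phi_freq \<delta> * u)\<^sup>2) / 2)" for u
    by (simp add: power_mult_distrib)
  let ?n = "\<lambda>t s. complex_of_real (std_normal_density s) * iexp (t * s)"
  have "complex_of_real (phi_bd b \<delta> x) = complex_of_real (1 / sqrt (2 * pi * \<delta>)) *
      (complex_of_real (exp (- ((phi_freq \<delta> * x)\<^sup>2) / 2))
        - complex_of_real (exp (- ((phi_freq \<delta> * (x - 2 * b))\<^sup>2) / 2)))"
    unfolding phi_bd_def gauss by simp
  also have "\<dots> = complex_of_real (1 / sqrt (2 * pi * \<delta>)) *
      ((LINT s|lborel. ?n (phi_freq \<delta> * x) s) - (LINT s|lborel. ?n (phi_freq \<delta> * (x - 2 * b)) s))"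
    unfolding std_normal_char_integral ..
  also have "\<dots> = (LINT s|lborel. complex_of_real (1 / sqrt (2 * pi * \<delta>)) *
      (?n (phi_freq \<delta> * x) s - ?n (phi_freq \<delta> * (x - 2 * b)) s))"
    by (simp only: integral_mult_right_zero Bochner_Integration.integral_diff
        [OF integrable_std_normal_density_iexp integrable_std_normal_density_iexp])
  also have "\<dots> = (LINT s|lborel. phi_weight b \<delta> s * iexp (phi_freq \<delta> * s * x))"
    unfolding phi_weight_def
    by (rule Bochner_Integration.integral_cong) (auto simp: algebra_simps exp_add[symmetric] exp_diff[symmetric])
  finally show ?thesis .
qed

lemma Re_csqrt_pos:
  assumes "0 < Re z"
  shows "0 < Re (csqrt z)"
  using assms abs_Re_le_cmod[of z] by simp

lemma resolvent_of_rescaled_fourier_symbol: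
  fixes z :: complex and D k :: real
  assumes D: "0 < D" and z: "0 < Re z"
  defines "c \<equiv> csqrt z / of_real (sqrt D)"
  shows "of_real (sqrt D) * (1 / csqrt z * (2 * c / (c\<^sup>2 + (of_real k)\<^sup>2)))
    = 2 * of_real D / (z + of_real (D * k\<^sup>2))"
proof -
  have "csqrt z \<noteq> 0" "complex_of_real (sqrt D) \<noteq> 0"
    using z D by auto
  moreover have "c\<^sup>2 = z / of_real D"
    using D by (simp add: c_def power_divide flip: of_real_power)
  moreover have "0 < Re (z + of_real (D * k\<^sup>2))"
    using z D by (simp add: add_pos_nonneg)
  then have "z + of_real (D * k\<^sup>2) \<noteq> 0"
    by (metis less_irrefl zero_complex.sel(1))
  moreover have "complex_of_real D = of_real (sqrt D) * of_real (sqrt D)"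
    using D by (simp flip: of_real_mult)
  ultimately show ?thesis
    unfolding c_def by (simp add: field_simps)
qed

lemma integral_exp_neg_abs_mixture_of_characters:
  fixes w :: "real \<Rightarrow> complex" and c :: complex and \<kappa> y :: real
  assumes w: "integrable lborel w" and c: "0 < Re c"
  shows "(LINT x|lborel. exp (- c * of_real \<bar>x - y\<bar>) * (LINT s|lborel. w s * iexp (\<kappa> * s * x)))
    = (LINT s|lborel. w s * (iexp (\<kappa> * s * y) * (2 * c / (c\<^sup>2 + (of_real (\<kappa> * s))\<^sup>2))))"
proof -
  have [measurable]: "w \<in> borel_measurable borel"
    using w by auto
  define F where "F = (\<lambda>x s. exp (- c * of_real \<bar>x - y\<bar>) * (w s * iexp (\<kappa> * s * x)))"
  have F_int: "integrable (lborel \<Otimes>\<^sub>M lborel) (case_prod F)"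
  proof (rule integrable_pair_lborel_product_bound
      [where a = "\<lambda>x. exp (- Re c * \<bar>x - y\<bar>)" and b = "\<lambda>s. norm (w s)"])
    show "case_prod F \<in> borel_measurable (lborel \<Otimes>\<^sub>M lborel)"
      unfolding F_def by measurable
    have "integrable lborel (\<lambda>x. norm (exp (- of_real (Re c) * of_real \<bar>x - y\<bar>) * iexp (0 * x)))"
      using integral_exp_neg_abs_iexp(1)[of "of_real (Re c)" y 0] c by (intro integrable_norm) simp
    then show "integrable lborel (\<lambda>x. exp (- Re c * \<bar>x - y\<bar>))"
      by (simp add: norm_exp_eq_Re)
    show "integrable lborel (\<lambda>s. norm (w s))"
      using w by (rule integrable_norm)
    show "norm (case_prod F (x, s)) \<le> exp (- Re c * \<bar>x - y\<bar>) * norm (w s)" for x s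
      unfolding F_def by (simp add: norm_mult norm_exp_eq_Re)
  qed auto
  have inner: "(LINT x|lborel. F x s) = w s * (iexp (\<kappa> * s * y) * (2 * c / (c\<^sup>2 + (of_real (\<kappa> * s))\<^sup>2)))" for s
  proof -
    have "(LINT x|lborel. F x s) = w s * (LINT x|lborel. exp (- c * of_real \<bar>x - y\<bar>) * iexp ((\<kappa> * s) * x))"
      unfolding F_def by (simp add: ac_simps)
    then show ?thesis
      using integral_exp_neg_abs_iexp(2)[OF c, of y "\<kappa> * s"] by simp
  qed
  have "(LINT x|lborel. exp (- c * of_real \<bar>x - y\<bar>) * (LINT s|lborel. w s * iexp (\<kappa> * s * x)))
      = (LINT x|lborel. LINT s|lborel. F x s)"
    by (simp only: F_def integral_mult_right_zero)
  also have "\<dots> = (LINT s|lborel. LINT x|lborel. F x s)"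
    using pair_sigma_finite.Fubini_integral[OF pair_sigma_finite_lborel F_int] by simp
  finally show ?thesis
    unfolding inner .
qed

lemma R_fun_resolvent_mixture:
  assumes D: "0 < D" and \<delta>: "0 < \<delta>" and z: "0 < Re z"
  shows "R_fun D b \<delta> y z = (LINT s|lborel.
    phi_weight b \<delta> s * iexp (phi_freq \<delta> * s * y) * (2 * of_real D) / (z + of_real (D * (phi_freq \<delta> * s)\<^sup>2)))"
proof -
  define c where "c = csqrt z / of_real (sqrt D)"
  have c: "0 < Re c"
    using Re_csqrt_pos[OF z] D by (simp add: c_def)
  have kernel: "exp (- complex_of_real (\<bar>x - y\<bar> / sqrt D) * csqrt z) = exp (- c * of_real \<bar>x - y\<bar>)" for x
    by (simp add: c_def ac_simps)
  have "R_fun D b \<delta> y z = of_real (sqrt D) * (LINT x|lborel. exp (- c * of_real \<bar>x - y\<bar>)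
      * (LINT s|lborel. phi_weight b \<delta> s * iexp (phi_freq \<delta> * s * x))) / csqrt z"
    unfolding R_fun_def kernel phi_bd_fourier[OF \<delta>] times_divide_eq_left integral_divide_zero by simp
  also have "\<dots> = of_real (sqrt D) * (LINT s|lborel. phi_weight b \<delta> s
      * (iexp (phi_freq \<delta> * s * y) * (2 * c / (c\<^sup>2 + (of_real (phi_freq \<delta> * s))\<^sup>2)))) / csqrt z"
    unfolding integral_exp_neg_abs_mixture_of_characters[OF integrable_phi_weight c] ..
  also have "\<dots> = (LINT s|lborel. phi_weight b \<delta> s * iexp (phi_freq \<delta> * s * y)
      * (of_real (sqrt D) * (1 / csqrt z * (2 * c / (c\<^sup>2 + (of_real (phi_freq \<delta> * s))\<^sup>2)))))"
    by (simp add: divide_inverse ac_simps)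
  finally show ?thesis
    unfolding c_def resolvent_of_rescaled_fourier_symbol[OF D z] by simp
qed

theorem lemma8p5:
  fixes D b \<delta> y :: real
  assumes "D > 0" and "b > 0" and "0 < \<delta>" and "\<delta> < D"
  shows "(\<exists>f :: real \<Rightarrow> complex. \<forall>z. 0 < Re z \<longrightarrow>
            set_integrable lborel {0<..} (\<lambda>t. exp (- z * complex_of_real t) * f t)
            \<and> R_fun D b \<delta> y z = (LINT t:{0<..}|lborel. exp (- z * complex_of_real t) * f t))
         \<and> R_fun D b \<delta> y \<in> O[inf at_infinity (principal {z. 0 < Re z})](\<lambda>z. inverse z)"
proof -
  define g where "g s = phi_weight b \<delta> s * iexp (phi_freq \<delta> * s * y) * (2 * of_real D)" for s
  define a where "a s = D * (phi_freq \<delta> * s)\<^sup>2" for s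
  have g: "integrable lborel g"
  proof (rule Bochner_Integration.integrable_bound)
    show "integrable lborel (\<lambda>s. 2 * D * norm (phi_weight b \<delta> s))"
      using integrable_norm[OF integrable_phi_weight] by simp
    show "g \<in> borel_measurable lborel"
      unfolding g_def by measurable
    show "AE s in lborel. norm (g s) \<le> norm (2 * D * norm (phi_weight b \<delta> s))"
      using \<open>D > 0\<close> by (intro AE_I2) (simp add: g_def norm_mult norm_exp_i_times)
  qed
  have a: "a \<in> borel_measurable borel" "\<And>s. 0 \<le> a s"
    unfolding a_def by measurable (use \<open>D > 0\<close> in simp)
  show ?thesis
  proof (rule resolvent_mixture_laplace_transform_bigo_inverse[OF g a])
    show "R_fun D b \<delta> y z = (LINT s|lborel. g s / (z + of_real (a s)))" if "0 < Re z" for z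
      using R_fun_resolvent_mixture[OF \<open>D > 0\<close> \<open>0 < \<delta>\<close> that] by (simp add: g_def a_def)
  qed
qed

end
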